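(* Let $\mathcal{L}\in\mathcal{A}(n,t,\ell)$ and assume there exists $X=(x_1,\dots,x_n)\in\mathcal{L}$, $X\neq\mathbf{0}$, with $|x_i|\le\ell$ for every $1\le i\le n$. Then $N_+(X)\ge t+1$ or $N_-(X)\ge t+1$.
   Context: $\mathcal{S}(n,t,\ell)=\{\mathcal{E}\in\mathbb{Z}^n: 0\le\varepsilon_i\le\ell \text{ for all } i,\ w_H(\mathcal{E})\le t\}$, with $w_H$ the number of nonzero coordinates. A lattice here is the set of integer combinations of $n$ linearly independent vectors of $\mathbb{Z}^n$. $\mathcal{A}(n,t,\ell)$ is the set of lattices $\mathcal{L}\subseteq\mathbb{Z}^n$ such that the translates $X+\mathcal{S}(n,t,\ell)$, $X\in\mathcal{L}$, are pairwise disjoint. For $X\in\mathbb{Z}^n$, $N_+(X)$ is the number of indices $i$ with $x_i>0$ and $N_-(X)$ the number of indices $i$ with $x_i<0$. *)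

theory Defs
  imports Complex_Main
begin

text \<open>Vectors of Z^n are represented as functions nat => int vanishing outside {0..<n}.\<close>

definition zvec :: "nat \<Rightarrow> (nat \<Rightarrow> int) set" where
  "zvec n = {x. \<forall>i\<ge>n. x i = 0}"

definition wH :: "nat \<Rightarrow> (nat \<Rightarrow> int) \<Rightarrow> nat" where
  "wH n x = card {i. i < n \<and> x i \<noteq> 0}"

definition Sset :: "nat \<Rightarrow> nat \<Rightarrow> nat \<Rightarrow> (nat \<Rightarrow> int) set" where
  "Sset n t l = {e \<in> zvec n. (\<forall>i<n. 0 \<le> e i \<and> e i \<le> int l) \<and> wH n e \<le> t}"

definition lin_indep :: "nat \<Rightarrow> (nat \<Rightarrow> nat \<Rightarrow> int) \<Rightarrow> bool" where
  "lin_indep n b \<longleftrightarrow>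
     (\<forall>c :: nat \<Rightarrow> real. (\<forall>i<n. (\<Sum>j<n. c j * real_of_int (b j i)) = 0) \<longrightarrow> (\<forall>j<n. c j = 0))"

definition lattice_gen :: "nat \<Rightarrow> (nat \<Rightarrow> nat \<Rightarrow> int) \<Rightarrow> (nat \<Rightarrow> int) set" where
  "lattice_gen n b = {x. \<exists>c :: nat \<Rightarrow> int. x = (\<lambda>i. if i < n then (\<Sum>j<n. c j * b j i) else 0)}"

definition is_lattice :: "nat \<Rightarrow> (nat \<Rightarrow> int) set \<Rightarrow> bool" where
  "is_lattice n L \<longleftrightarrow> (\<exists>b. (\<forall>j<n. b j \<in> zvec n) \<and> lin_indep n b \<and> L = lattice_gen n b)"

definition Aset :: "nat \<Rightarrow> nat \<Rightarrow> nat \<Rightarrow> (nat \<Rightarrow> int) set set" where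
  "Aset n t l = {L. is_lattice n L \<and>
     (\<forall>X\<in>L. \<forall>Y\<in>L. X \<noteq> Y \<longrightarrow>
        ((\<lambda>e i. X i + e i) ` Sset n t l) \<inter> ((\<lambda>e i. Y i + e i) ` Sset n t l) = {})}"

definition Npos :: "nat \<Rightarrow> (nat \<Rightarrow> int) \<Rightarrow> nat" where
  "Npos n x = card {i. i < n \<and> x i > 0}"

definition Nneg :: "nat \<Rightarrow> (nat \<Rightarrow> int) \<Rightarrow> nat" where
  "Nneg n x = card {i. i < n \<and> x i < 0}"

end

theory Submission
  imports Defs
begin

text \<open>If both \<open>N\<^sub>+(X)\<close> and \<open>N\<^sub>-(X)\<close> were at most \<open>t\<close>, the positive part \<open>X\<^sup>+\<close> and the
  negative part \<open>X\<^sup>-\<close> of \<open>X\<close> would both lie in \<open>S(n,t,\<ell>)\<close>, since \<open>|x\<^sub>i| \<le> \<ell>\<close>. Then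
  \<open>X + X\<^sup>- = 0 + X\<^sup>+\<close> is a common point of the translates of \<open>S(n,t,\<ell>)\<close> by the distinct
  lattice points \<open>X\<close> and \<open>0\<close>, contradicting the packing condition.\<close>

lemma zero_in_lattice_gen: "(\<lambda>i. 0) \<in> lattice_gen n b"
  unfolding lattice_gen_def by (rule CollectI, rule exI[of _ "\<lambda>_. 0"]) auto

lemma lattice_gen_subset_zvec: "lattice_gen n b \<subseteq> zvec n"
  unfolding lattice_gen_def zvec_def by auto

lemma Aset_translates_distinct:
  assumes "L \<in> Aset n t l" and "X \<in> L" and "Y \<in> L" and "X \<noteq> Y"
    and "e \<in> Sset n t l" and "f \<in> Sset n t l"
  shows "(\<lambda>i. X i + e i) \<noteq> (\<lambda>i. Y i + f i)"
  using assms unfolding Aset_def by blast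

definition pos_part :: "nat \<Rightarrow> (nat \<Rightarrow> int) \<Rightarrow> nat \<Rightarrow> int" where
  "pos_part n x = (\<lambda>i. if i < n then max (x i) 0 else 0)"

lemma wH_pos_part: "wH n (pos_part n x) = Npos n x"
  unfolding wH_def Npos_def pos_part_def by (rule arg_cong[where f = card]) auto

lemma Nneg_eq_Npos_uminus: "Nneg n x = Npos n (\<lambda>i. - x i)"
  unfolding Nneg_def Npos_def by simp

lemma pos_part_in_Sset:
  assumes "\<forall>i<n. x i \<le> int l" and "Npos n x \<le> t"
  shows "pos_part n x \<in> Sset n t l"
  using assms wH_pos_part[of n x] unfolding Sset_def zvec_def by (auto simp: pos_part_def)

lemma add_neg_part_eq_pos_part:
  assumes "x \<in> zvec n"
  shows "(\<lambda>i. x i + pos_part n (\<lambda>i. - x i) i) = pos_part n x"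
  using assms unfolding zvec_def pos_part_def by (auto simp: max_def)

theorem mainTheorem14:
  fixes n t l :: nat and L :: "(nat \<Rightarrow> int) set" and X :: "nat \<Rightarrow> int"
  assumes "L \<in> Aset n t l"
    and "X \<in> L" and "X \<noteq> (\<lambda>i. 0)"
    and "\<forall>i<n. \<bar>X i\<bar> \<le> int l"
  shows "Npos n X \<ge> t + 1 \<or> Nneg n X \<ge> t + 1"
proof (rule ccontr)
  assume "\<not> ?thesis"
  hence "Npos n X \<le> t" and "Npos n (\<lambda>i. - X i) \<le> t"
    by (auto simp: Nneg_eq_Npos_uminus)
  with assms(4) have pos: "pos_part n X \<in> Sset n t l"
    and neg: "pos_part n (\<lambda>i. - X i) \<in> Sset n t l"
    by (auto intro!: pos_part_in_Sset)
  obtain b where L: "L = lattice_gen n b"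
    using assms(1) unfolding Aset_def is_lattice_def by auto
  have "X \<in> zvec n"
    using assms(2) lattice_gen_subset_zvec unfolding L by blast
  hence "(\<lambda>i. X i + pos_part n (\<lambda>i. - X i) i) = (\<lambda>i. 0 + pos_part n X i)"
    by (simp add: add_neg_part_eq_pos_part)
  moreover have "(\<lambda>i. X i + pos_part n (\<lambda>i. - X i) i) \<noteq> (\<lambda>i. 0 + pos_part n X i)"
    using Aset_translates_distinct[OF assms(1,2) _ assms(3) neg pos] zero_in_lattice_gen
    unfolding L by blast
  ultimately show False by contradiction
qed

end
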